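(* If $q$ is even, each of the $q-1$ $T$-sls-pencils $T\mathcal S_\theta$ arches over a distinct $T$-plane. If $q$ is odd, then each of the $\frac{q-1}{2}$ $T$-sls-pencils $T\mathcal S_\theta$ with $N(\theta)$ a nonzero square in $\mathbb{F}_q$ arches over exactly two of the $T$-planes, and the remaining $\frac{q-1}{2}$ $T$-sls-pencils arch over no $T$-plane.
   Context: Let $q$ be a prime power, $\mathbb{F}_{q^3}^*=\mathbb{F}_{q^3}\setminus\{0\}$, $N(x)=x^{q^2+q+1}$. Points of $\mathrm{PG}(2,q^3)$ have homogeneous coordinates $(x,y,z)$. Let $T=(0,0,1)$ and $m_T$ the line $[0,0,1]$. For $\theta\in\mathbb{F}_{q^3}^*$ let $\mathcal S_\theta=\{(x\theta,x^q,0):x\in\mathbb{F}_{q^3}^*\}$; $\mathcal S_{\theta_1}=\mathcal S_{\theta_2}$ iff $N(\theta_1)=N(\theta_2)$, giving $q-1$ distinct sets, and the $q-1$ pencils $T\mathcal S_\theta=\{TX:X\in\mathcal S_\theta\}$ are the $T$-sls-pencils. For $\theta\in\mathbb{F}_{q^3}^*$, the $T$-plane $\Pi_\theta=\{(r\theta^{q+1},r^q,r^{q^2}\theta):r\in\mathbb{F}_{q^3}^*\}$ is a subplane of order $q$; $\Pi_\theta=\Pi_\kappa$ iff $N(\theta)=N(\kappa)$, so there are $q-1$ distinct $T$-planes. A $T$-sls-pencil arches over a $T$-plane if each of the $q^2+q+1$ lines of the pencil contains a unique point of the $T$-plane. *)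

theory Defs
  imports "HOL-Computational_Algebra.Primes"
begin

definition sc3 :: "'a::field \<Rightarrow> 'a \<times> 'a \<times> 'a \<Rightarrow> 'a \<times> 'a \<times> 'a" where
  "sc3 c v = (case v of (x, y, z) \<Rightarrow> (c * x, c * y, c * z))"

definition add3 :: "'a::field \<times> 'a \<times> 'a \<Rightarrow> 'a \<times> 'a \<times> 'a \<Rightarrow> 'a \<times> 'a \<times> 'a" where
  "add3 u v = (case u of (x, y, z) \<Rightarrow> case v of (x', y', z') \<Rightarrow> (x + x', y + y', z + z'))"

definition pt :: "'a::field \<times> 'a \<times> 'a \<Rightarrow> ('a \<times> 'a \<times> 'a) set" where
  "pt v = {sc3 c v | c. c \<noteq> 0}"

definition PG2 :: "('a::field \<times> 'a \<times> 'a) set set" where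
  "PG2 = {pt v | v. v \<noteq> (0, 0, 0)}"

definition join :: "('a::field \<times> 'a \<times> 'a) set \<Rightarrow> ('a \<times> 'a \<times> 'a) set \<Rightarrow> ('a \<times> 'a \<times> 'a) set set" where
  "join P Q = {R \<in> PG2. \<exists>u\<in>P. \<exists>v\<in>Q. \<exists>w\<in>R. \<exists>a b. w = add3 (sc3 a u) (sc3 b v)}"

definition Tpt :: "('a::field \<times> 'a \<times> 'a) set" where
  "Tpt = pt (0, 0, 1)"

definition normq :: "nat \<Rightarrow> 'a::field \<Rightarrow> 'a" where
  "normq q x = x ^ (q^2 + q + 1)"

definition slsS :: "nat \<Rightarrow> 'a::field \<Rightarrow> ('a \<times> 'a \<times> 'a) set set" where
  "slsS q \<theta> = {pt (x * \<theta>, x ^ q, 0) | x. x \<noteq> 0}"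

definition sls_pencil :: "nat \<Rightarrow> 'a::field \<Rightarrow> ('a \<times> 'a \<times> 'a) set set set" where
  "sls_pencil q \<theta> = {join Tpt X | X. X \<in> slsS q \<theta>}"

definition Tplane :: "nat \<Rightarrow> 'a::field \<Rightarrow> ('a \<times> 'a \<times> 'a) set set" where
  "Tplane q \<theta> = {pt (r * \<theta> ^ (q + 1), r ^ q, r ^ (q^2) * \<theta>) | r. r \<noteq> 0}"

definition T_sls_pencils :: "nat \<Rightarrow> ('a::field \<times> 'a \<times> 'a) set set set set" where
  "T_sls_pencils q = {sls_pencil q \<theta> | \<theta>. \<theta> \<noteq> 0}"

definition T_planes :: "nat \<Rightarrow> ('a::field \<times> 'a \<times> 'a) set set set" where
  "T_planes q = {Tplane q \<theta> | \<theta>. \<theta> \<noteq> 0}"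

definition arches :: "('a \<times> 'a \<times> 'a) set set set \<Rightarrow> ('a \<times> 'a \<times> 'a) set set \<Rightarrow> bool" where
  "arches Pen Pi \<longleftrightarrow> (\<forall>L\<in>Pen. \<exists>!P. P \<in> L \<and> P \<in> Pi)"

text \<open>F_q inside F_{q^3} is {b. b^q = b}.\<close>
definition nonzero_Fq_square :: "nat \<Rightarrow> 'a::field \<Rightarrow> bool" where
  "nonzero_Fq_square q a \<longleftrightarrow> (\<exists>b. b ^ q = b \<and> b \<noteq> 0 \<and> a = b ^ 2)"

end

theory Submission
  imports Defs "HOL-Library.Cardinality" "HOL-Algebra.Algebraic_Closure_Type"
begin

text \<open>
  Let F be the field with q^3 elements. A point of the T-plane with parameter r lies on the
  line joining T to (x\<theta>, x^q, 0) iff \<kappa>^(q+1) x^(q-1) = r^(q-1) \<theta>. As F^* is cyclic of order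
  (q - 1)(q^2 + q + 1), the elements of norm 1 are exactly the (q-1)-th powers (Hilbert 90)
  and the norms are exactly F_q^*. Hence the pencil of \<theta> arches over the plane of \<kappa> iff
  N(\<theta>) = N(\<kappa>)^2, the point on each line being unique because r^(q-1) determines r up to
  F_q^*, which fixes the point. Pencils and planes are determined by the norms of \<theta> and \<kappa>,
  so everything reduces to squaring on the cyclic group F_q^*: a bijection for even q, and
  two-to-one onto the (q - 1)/2 squares for odd q.
\<close>

section \<open>The multiplicative group of a finite field\<close>

lemma finite_field_generator:
  obtains g :: "'a::{finite,field}"
  where "g \<noteq> 0" and "\<And>x. x \<noteq> 0 \<Longrightarrow> \<exists>i. x = g ^ i"
    and "\<And>n. g ^ n = 1 \<longleftrightarrow> CARD('a) - 1 dvd n"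
proof -
  let ?R = "ring_of_type_algebra :: 'a ring"
  interpret R: Ring.field ?R by (rule field_from_type_algebra)
  let ?G = "Multiplicative_Group.mult_of ?R"
  interpret G: group ?G by (rule R.field_mult_group)
  have pow_R: "x [^]\<^bsub>?R\<^esub> n = x ^ n" for x :: 'a and n :: nat
    by (induction n) (simp_all add: ring_of_type_algebra_def)
  have carrier_G: "carrier ?G = UNIV - {0}"
    by (simp add: ring_of_type_algebra_def)
  obtain g where g: "g \<in> carrier ?G"
    and gen: "carrier ?G = {g [^]\<^bsub>?R\<^esub> i | i::nat. i \<in> UNIV}"
    using R.finite_field_mult_group_has_gen by (auto simp: ring_of_type_algebra_def)
  have "generate ?G {g} = carrier ?G"
    using G.generate_pow_on_finite_carrier[OF _ g] gen carrier_G by (simp add: Multiplicative_Group.nat_pow_mult_of)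
  then have ord: "G.ord g = CARD('a) - 1"
    using G.generate_pow_card[OF g] carrier_G by (simp add: card_Diff_singleton ring_of_type_algebra_def)
  show thesis
  proof
    show "g \<noteq> 0" using g by (simp add: ring_of_type_algebra_def)
    show "\<exists>i. x = g ^ i" if "x \<noteq> 0" for x
      using that gen carrier_G by (auto simp: pow_R)
    show "g ^ n = 1 \<longleftrightarrow> CARD('a) - 1 dvd n" for n
      using G.pow_eq_id[OF g, of n] ord
      by (simp add: Multiplicative_Group.nat_pow_mult_of pow_R) (simp add: ring_of_type_algebra_def)
  qed
qed

lemma card_finite_field_ge_2: "2 \<le> CARD('a::{finite,field})"
proof -
  have "card {0, 1::'a} \<le> CARD('a)" by (rule card_mono) auto
  then show ?thesis by simp
qed

lemma pow_card_minus_1_eq_1: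
  fixes x :: "'a::{finite,field}"
  assumes "x \<noteq> 0"
  shows "x ^ (CARD('a) - 1) = 1"
proof -
  obtain g :: 'a where "g \<noteq> 0" and gen: "\<And>x. x \<noteq> 0 \<Longrightarrow> \<exists>i. x = g ^ i"
    and ord: "\<And>n. g ^ n = 1 \<longleftrightarrow> CARD('a) - 1 dvd n"
    by (rule finite_field_generator[where 'a='a]) blast
  obtain i where "x = g ^ i" using gen assms by blast
  then have "x ^ (CARD('a) - 1) = (g ^ (CARD('a) - 1)) ^ i"
    by (metis power_mult mult.commute)
  also have "\<dots> = 1" using ord[of "CARD('a) - 1"] by simp
  finally show ?thesis .
qed

lemma pow_card_eq: "x ^ CARD('a) = (x::'a::{finite,field})"
proof (cases "x = 0")
  case False
  then show ?thesis
    using pow_card_minus_1_eq_1[OF False] power_minus_mult[of "CARD('a)" x] by simp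
qed simp

lemma power_inj_on_below_order:
  fixes g :: "'a::field"
  assumes "g \<noteq> 0" and ord: "\<And>n. g ^ n = 1 \<longleftrightarrow> N dvd n"
  shows "inj_on ((^) g) {..<N}"
proof (rule linorder_inj_onI')
  fix i j assume "i \<in> {..<N}" "j \<in> {..<N}" "i < j"
  then have "\<not> N dvd j - i" by (auto dest: dvd_imp_le)
  then have "g ^ (j - i) \<noteq> 1" using ord by blast
  moreover have "g ^ j = g ^ i * g ^ (j - i)" using \<open>i < j\<close> by (simp add: power_add[symmetric])
  ultimately show "g ^ i \<noteq> g ^ j" using assms(1) by auto
qed

lemma pow_eq_1_iff_power:
  fixes y :: "'a::{finite,field}"
  assumes N: "CARD('a) - 1 = m * s"
  shows "y ^ m = 1 \<longleftrightarrow> (\<exists>x. x \<noteq> 0 \<and> y = x ^ s)"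
proof
  assume y: "y ^ m = 1"
  obtain g :: 'a where "g \<noteq> 0" and gen: "\<And>x. x \<noteq> 0 \<Longrightarrow> \<exists>i. x = g ^ i"
    and ord: "\<And>n. g ^ n = 1 \<longleftrightarrow> CARD('a) - 1 dvd n"
    by (rule finite_field_generator[where 'a='a]) blast
  have "m * s \<noteq> 0" using N card_finite_field_ge_2[where 'a='a] by linarith
  then have "m \<noteq> 0" by simp
  then have "y \<noteq> 0" using y by (metis power_0_left zero_neq_one)
  then obtain i where i: "y = g ^ i" using gen by blast
  then have "g ^ (i * m) = 1" using y by (simp add: power_mult)
  then have "s * m dvd i * m" using ord N by (simp add: mult.commute)
  then have "s dvd i" using \<open>m \<noteq> 0\<close> by simp
  then obtain k where "i = s * k" by blast
  then show "\<exists>x. x \<noteq> 0 \<and> y = x ^ s"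
    using i \<open>g \<noteq> 0\<close> by (intro exI[of _ "g ^ k"]) (simp add: power_mult[symmetric] mult.commute)
next
  assume "\<exists>x. x \<noteq> 0 \<and> y = x ^ s"
  then obtain x where "x \<noteq> 0" "y = x ^ s" by blast
  then show "y ^ m = 1"
    using pow_card_minus_1_eq_1[of x] N by (simp add: power_mult[symmetric] mult.commute)
qed

lemma card_roots_of_unity:
  assumes "m dvd CARD('a::{finite,field}) - 1"
  shows "card {y::'a. y ^ m = 1} = m"
proof -
  obtain s where N: "CARD('a) - 1 = m * s" using assms by blast
  have "m * s \<noteq> 0" using N card_finite_field_ge_2[where 'a='a] by linarith
  then have "s \<noteq> 0" by simp
  obtain g :: 'a where "g \<noteq> 0" and gen: "\<And>x. x \<noteq> 0 \<Longrightarrow> \<exists>i. x = g ^ i"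
    and ord: "\<And>n. g ^ n = 1 \<longleftrightarrow> CARD('a) - 1 dvd n"
    by (rule finite_field_generator[where 'a='a]) blast
  define h where "h = g ^ s"
  have "h \<noteq> 0" using \<open>g \<noteq> 0\<close> by (simp add: h_def)
  have ord_h: "h ^ n = 1 \<longleftrightarrow> m dvd n" for n
    using ord[of "s * n"] \<open>s \<noteq> 0\<close> unfolding N h_def power_mult[symmetric] by (simp add: mult.commute)
  have "{y. y ^ m = 1} = (^) h ` {..<m}"
  proof (intro equalityI subsetI)
    fix y :: 'a assume "y \<in> {y. y ^ m = 1}"
    then obtain x :: 'a where "x \<noteq> 0" "y = x ^ s" using pow_eq_1_iff_power[OF N] by blast
    then obtain i where "y = h ^ i" using gen unfolding h_def by (metis power_mult mult.commute)
    also have "h ^ i = (h ^ m) ^ (i div m) * h ^ (i mod m)"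
      by (metis div_mult_mod_eq power_add power_mult mult.commute)
    finally have "y = h ^ (i mod m)" using ord_h[of m] by simp
    moreover have "m \<noteq> 0" using \<open>m * s \<noteq> 0\<close> by simp
    ultimately show "y \<in> (^) h ` {..<m}" by simp
  next
    fix y :: 'a assume "y \<in> (^) h ` {..<m}"
    then obtain k where "y = h ^ k" by blast
    then show "y \<in> {y. y ^ m = 1}" using ord_h[of "k * m"] by (simp add: power_mult[symmetric])
  qed
  then show ?thesis
    using card_image[OF power_inj_on_below_order[OF \<open>h \<noteq> 0\<close> ord_h]] by simp
qed

lemma power2_eq_power2_iff_if_even_card:
  fixes x y :: "'a::{finite,field}"
  assumes "even CARD('a)"
  shows "x ^ 2 = y ^ 2 \<longleftrightarrow> x = y"
proof
  assume sq: "x ^ 2 = y ^ 2"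
  show "x = y"
  proof (cases "y = 0")
    case False
    define c where "c = x / y"
    have "c ^ 2 = 1" using sq False by (simp add: c_def power_divide)
    have "c = c ^ CARD('a)" by (rule pow_card_eq[symmetric])
    also have "\<dots> = (c ^ 2) ^ (CARD('a) div 2)"
      using assms by (metis dvd_mult_div_cancel power_mult)
    also have "\<dots> = 1" using \<open>c ^ 2 = 1\<close> by simp
    finally show ?thesis using False by (simp add: c_def)
  qed (use sq in simp)
qed simp

lemma one_neq_minus_one_if_odd_card:
  assumes "odd CARD('a::{finite,field})"
  shows "(1::'a) \<noteq> - 1"
proof
  assume "(1::'a) = - 1"
  then have "{y::'a. y ^ 2 = 1} \<subseteq> {1}" by (auto simp: power2_eq_1_iff)
  then have "card {y::'a. y ^ 2 = 1} \<le> card {1::'a}" by (rule card_mono[rotated]) simp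
  moreover have "card {y::'a. y ^ 2 = 1} = 2"
    using assms card_finite_field_ge_2[where 'a='a] by (intro card_roots_of_unity) simp
  ultimately show False by simp
qed

section \<open>Points and lines of PG(2,F)\<close>

lemma sc3_apply [simp]: "sc3 c (x, y, z) = (c * x, c * y, c * z)"
  by (simp add: sc3_def)

lemma add3_apply [simp]: "add3 (x, y, z) (x', y', z') = (x + x', y + y', z + z')"
  by (simp add: add3_def)

lemma sc3_sc3: "sc3 c (sc3 d v) = sc3 (c * d) v"
  by (cases v) (simp add: mult.assoc)

lemma Setcompr_nonzero_mult_right:
  fixes c :: "'a::field"
  assumes "c \<noteq> 0"
  shows "{f (r * c) | r. r \<noteq> 0} = {f r | r. r \<noteq> 0}"
proof (intro equalityI subsetI)
  fix y assume "y \<in> {f r | r. r \<noteq> 0}"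
  then obtain r where "r \<noteq> 0" "y = f r" by blast
  then have "r / c \<noteq> 0" "y = f ((r / c) * c)" using assms by simp_all
  then show "y \<in> {f (r * c) | r. r \<noteq> 0}" by blast
qed (use assms in auto)

lemma mem_pt_iff: "w \<in> pt v \<longleftrightarrow> (\<exists>c. c \<noteq> 0 \<and> w = sc3 c v)"
  by (auto simp: pt_def)

lemma pt_sc3: "c \<noteq> 0 \<Longrightarrow> pt (sc3 c v) = pt v"
  unfolding pt_def sc3_sc3 by (rule Setcompr_nonzero_mult_right)

lemma mem_pt_self: "v \<in> pt v"
  unfolding mem_pt_iff by (intro exI[of _ 1]) (cases v, simp)

lemma pt_eq_imp_proportional: "pt v = pt w \<Longrightarrow> \<exists>c. c \<noteq> 0 \<and> w = sc3 c v"
  using mem_pt_self[of w] mem_pt_iff[of w v] by simp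

lemma pt_mem_join_Tpt_iff:
  fixes a1 a2 v1 v2 v3 :: "'a::field"
  assumes "a2 \<noteq> 0" and "(v1, v2, v3) \<noteq> (0, 0, 0)"
  shows "pt (v1, v2, v3) \<in> Defs.join Tpt (pt (a1, a2, 0)) \<longleftrightarrow> v1 * a2 = v2 * a1"
proof
  assume "pt (v1, v2, v3) \<in> Defs.join Tpt (pt (a1, a2, 0))"
  then obtain u v w a b where "u \<in> Tpt" "v \<in> pt (a1, a2, 0)" "w \<in> pt (v1, v2, v3)"
    and w: "w = add3 (sc3 a u) (sc3 b v)"
    unfolding Defs.join_def by blast
  then obtain d f c where "u = sc3 d (0, 0, 1)" "v = sc3 f (a1, a2, 0)"
    and "c \<noteq> 0" "w = sc3 c (v1, v2, v3)"
    unfolding Tpt_def mem_pt_iff by blast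
  with w have "c * v1 = b * f * a1" "c * v2 = b * f * a2" by (simp_all add: mult.assoc)
  then have "c * (v1 * a2) = c * (v2 * a1)" by (metis mult.assoc mult.commute)
  then show "v1 * a2 = v2 * a1" using \<open>c \<noteq> 0\<close> by simp
next
  assume "v1 * a2 = v2 * a1"
  then have "(v1, v2, v3) = add3 (sc3 v3 (0, 0, 1)) (sc3 (v2 / a2) (a1, a2, 0))"
    using assms(1) by (simp add: field_simps)
  moreover have "pt (v1, v2, v3) \<in> PG2" using assms(2) by (auto simp: PG2_def)
  ultimately show "pt (v1, v2, v3) \<in> Defs.join Tpt (pt (a1, a2, 0))"
    unfolding Defs.join_def Tpt_def using mem_pt_self by blast
qed

section \<open>T-planes, T-sls-pencils and the norm map\<close>

lemma normq_mult: "normq q (x * y) = normq q x * normq q y"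
  by (simp add: normq_def power_mult_distrib)

lemma normq_power: "normq q (x ^ k) = normq q x ^ k"
  unfolding normq_def by (metis power_mult mult.commute)

lemma normq_divide: "normq q (x / y) = normq q x / normq q y"
  by (simp add: normq_def power_divide)

lemma normq_eq_0_iff [simp]: "normq q x = 0 \<longleftrightarrow> x = 0"
  by (auto simp: normq_def)

lemma nonzero_pow_eq_self_iff:
  fixes x :: "'a::field"
  assumes "1 < q"
  shows "x \<noteq> 0 \<and> x ^ q = x \<longleftrightarrow> x ^ (q - 1) = 1"
  using power_minus_mult[of q x] assms by (cases "x = 0") (auto simp: power_0_left)

lemma pt_mem_slsS: "x \<noteq> 0 \<Longrightarrow> pt (x * \<theta>, x ^ q, 0) \<in> slsS q \<theta>"
  unfolding slsS_def by blast

lemma join_mem_sls_pencil: "x \<noteq> 0 \<Longrightarrow> Defs.join Tpt (pt (x * \<theta>, x ^ q, 0)) \<in> sls_pencil q \<theta>"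
  unfolding sls_pencil_def using pt_mem_slsS by blast

lemma pt_mem_Tplane: "r \<noteq> 0 \<Longrightarrow> pt (r * \<kappa> ^ (q + 1), r ^ q, r ^ (q ^ 2) * \<kappa>) \<in> Tplane q \<kappa>"
  unfolding Tplane_def by blast

lemma slsS_mult_pow:
  fixes \<theta> u :: "'a::field"
  assumes "0 < q" and "u \<noteq> 0"
  shows "slsS q (\<theta> * u ^ (q - 1)) = slsS q \<theta>"
proof -
  have "pt ((x * u) * (\<theta> * u ^ (q - 1)), (x * u) ^ q, 0) = pt (x * \<theta>, x ^ q, 0)" for x
  proof -
    have "((x * u) * (\<theta> * u ^ (q - 1)), (x * u) ^ q, 0) = sc3 (u ^ q) (x * \<theta>, x ^ q, 0)"
      using power_minus_mult[OF assms(1), of u] by (simp add: algebra_simps)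
    moreover have "u ^ q \<noteq> 0" using assms(2) by simp
    ultimately show ?thesis by (metis pt_sc3)
  qed
  then show ?thesis
    unfolding slsS_def
    using Setcompr_nonzero_mult_right[OF assms(2), of "\<lambda>x. pt (x * (\<theta> * u ^ (q - 1)), x ^ q, 0)"]
    by simp
qed

text \<open>
  Replacing \<kappa> by \<kappa> t^(q-1) is undone by reparametrising r as r t^(q+1): the representative
  of each point is then multiplied by t^(q^2+q), using t^(q^3) = t.
\<close>

lemma Tplane_mult_pow:
  fixes \<kappa> t :: "'a::field"
  assumes "0 < q" and "t \<noteq> 0" and "t ^ (q ^ 3) = t"
  shows "Tplane q (\<kappa> * t ^ (q - 1)) = Tplane q \<kappa>"
proof -
  obtain k where k: "q = Suc k" using assms(1) gr0_implies_Suc by blast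
  have e1: "t ^ (q + 1) * (t ^ (q - 1)) ^ (q + 1) = t ^ (q ^ 2 + q)"
    unfolding k by (simp add: power_mult[symmetric] power_add[symmetric] algebra_simps power2_eq_square)
  have e2: "(t ^ (q + 1)) ^ q = t ^ (q ^ 2 + q)"
    unfolding power_mult[symmetric] by (simp add: algebra_simps power2_eq_square)
  have "(t ^ (q + 1)) ^ (q ^ 2) * t ^ (q - 1) = t ^ (q ^ 3) * t ^ (q ^ 2 + q - 1)"
    unfolding k by (simp add: power_mult[symmetric] power_add[symmetric] algebra_simps power2_eq_square power3_eq_cube)
  also have "\<dots> = t ^ (q ^ 2 + q)"
    using assms(3) unfolding k by simp
  finally have e3: "(t ^ (q + 1)) ^ (q ^ 2) * t ^ (q - 1) = t ^ (q ^ 2 + q)" .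
  have "pt ((r * t ^ (q + 1)) * (\<kappa> * t ^ (q - 1)) ^ (q + 1), (r * t ^ (q + 1)) ^ q,
            (r * t ^ (q + 1)) ^ (q ^ 2) * (\<kappa> * t ^ (q - 1)))
        = pt (r * \<kappa> ^ (q + 1), r ^ q, r ^ (q ^ 2) * \<kappa>)" for r
  proof -
    have "((r * t ^ (q + 1)) * (\<kappa> * t ^ (q - 1)) ^ (q + 1), (r * t ^ (q + 1)) ^ q,
            (r * t ^ (q + 1)) ^ (q ^ 2) * (\<kappa> * t ^ (q - 1)))
          = sc3 (t ^ (q ^ 2 + q)) (r * \<kappa> ^ (q + 1), r ^ q, r ^ (q ^ 2) * \<kappa>)"
      using e1 e2 e3 by (simp add: algebra_simps)
    moreover have "t ^ (q ^ 2 + q) \<noteq> 0" using assms(2) by simp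
    ultimately show ?thesis by (metis pt_sc3)
  qed
  then show ?thesis
    unfolding Tplane_def
    using Setcompr_nonzero_mult_right[of "t ^ (q + 1)"
        "\<lambda>r. pt (r * (\<kappa> * t ^ (q - 1)) ^ (q + 1), r ^ q, r ^ (q ^ 2) * (\<kappa> * t ^ (q - 1)))"] assms(2)
    by simp
qed

lemma Tplane_point_eq:
  fixes \<kappa> r r' :: "'a::field"
  assumes "1 < q" and "r \<noteq> 0" and "r' ^ (q - 1) = r ^ (q - 1)"
  shows "pt (r' * \<kappa> ^ (q + 1), r' ^ q, r' ^ (q ^ 2) * \<kappa>) = pt (r * \<kappa> ^ (q + 1), r ^ q, r ^ (q ^ 2) * \<kappa>)"
proof -
  define c where "c = r' / r"
  have "c ^ (q - 1) = 1" using assms(2,3) by (simp add: c_def power_divide)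
  then have "c \<noteq> 0" and cq: "c ^ q = c" using nonzero_pow_eq_self_iff[OF assms(1)] by auto
  then have cq2: "c ^ (q ^ 2) = c" by (simp add: power2_eq_square power_mult)
  have "r' = c * r" using assms(2) by (simp add: c_def)
  then have "(r' * \<kappa> ^ (q + 1), r' ^ q, r' ^ (q ^ 2) * \<kappa>) = sc3 c (r * \<kappa> ^ (q + 1), r ^ q, r ^ (q ^ 2) * \<kappa>)"
    using cq cq2 by (simp add: power_mult_distrib mult.assoc)
  then show ?thesis by (simp only: pt_sc3[OF \<open>c \<noteq> 0\<close>])
qed

lemma Tplane_point_mem_sls_line_iff:
  fixes \<kappa> \<theta> r x :: "'a::field"
  assumes "0 < q" and "r \<noteq> 0" and "x \<noteq> 0"
  shows "pt (r * \<kappa> ^ (q + 1), r ^ q, r ^ (q ^ 2) * \<kappa>) \<in> Defs.join Tpt (pt (x * \<theta>, x ^ q, 0))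
    \<longleftrightarrow> \<kappa> ^ (q + 1) * x ^ (q - 1) = r ^ (q - 1) * \<theta>"
proof -
  have rq: "r ^ q = r ^ (q - 1) * r" and xq: "x ^ q = x ^ (q - 1) * x"
    by (metis power_minus_mult assms(1))+
  have "pt (r * \<kappa> ^ (q + 1), r ^ q, r ^ (q ^ 2) * \<kappa>) \<in> Defs.join Tpt (pt (x * \<theta>, x ^ q, 0))
      \<longleftrightarrow> r * \<kappa> ^ (q + 1) * x ^ q = r ^ q * (x * \<theta>)"
    using assms by (intro pt_mem_join_Tpt_iff) simp_all
  also have "\<dots> \<longleftrightarrow> (r * x) * (\<kappa> ^ (q + 1) * x ^ (q - 1)) = (r * x) * (r ^ (q - 1) * \<theta>)"
    unfolding rq xq by (simp only: ac_simps)
  also have "\<dots> \<longleftrightarrow> \<kappa> ^ (q + 1) * x ^ (q - 1) = r ^ (q - 1) * \<theta>"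
    using assms(2,3) by simp
  finally show ?thesis .
qed

lemma sls_line_meets_Tplane_uniquely:
  fixes \<kappa> \<theta> t x :: "'a::field"
  assumes "1 < q" and "x \<noteq> 0" and "t \<noteq> 0" and "\<theta> \<noteq> 0"
    and t: "\<kappa> ^ (q + 1) = t ^ (q - 1) * \<theta>"
  shows "\<exists>!P. P \<in> Defs.join Tpt (pt (x * \<theta>, x ^ q, 0)) \<and> P \<in> Tplane q \<kappa>"
proof -
  let ?L = "Defs.join Tpt (pt (x * \<theta>, x ^ q, 0))"
  let ?P = "\<lambda>r. pt (r * \<kappa> ^ (q + 1), r ^ q, r ^ (q ^ 2) * \<kappa>)"
  have on_L: "?P r \<in> ?L \<longleftrightarrow> r ^ (q - 1) = (t * x) ^ (q - 1)" if "r \<noteq> 0" for r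
  proof -
    have "?P r \<in> ?L \<longleftrightarrow> \<kappa> ^ (q + 1) * x ^ (q - 1) = r ^ (q - 1) * \<theta>"
      using assms(1,2) that by (intro Tplane_point_mem_sls_line_iff) simp_all
    also have "\<dots> \<longleftrightarrow> (t * x) ^ (q - 1) * \<theta> = r ^ (q - 1) * \<theta>"
      unfolding t power_mult_distrib by (simp only: ac_simps)
    also have "\<dots> \<longleftrightarrow> r ^ (q - 1) = (t * x) ^ (q - 1)"
      using assms(4) by auto
    finally show ?thesis .
  qed
  have "t * x \<noteq> 0" using assms(2,3) by simp
  show ?thesis
  proof (rule ex1I[of _ "?P (t * x)"])
    show "?P (t * x) \<in> ?L \<and> ?P (t * x) \<in> Tplane q \<kappa>"
      using on_L[OF \<open>t * x \<noteq> 0\<close>] pt_mem_Tplane[OF \<open>t * x \<noteq> 0\<close>] by blast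
  next
    fix P assume "P \<in> ?L \<and> P \<in> Tplane q \<kappa>"
    then obtain r where "r \<noteq> 0" "P = ?P r" "?P r \<in> ?L" unfolding Tplane_def by blast
    then have "r ^ (q - 1) = (t * x) ^ (q - 1)" using on_L[OF \<open>r \<noteq> 0\<close>] by blast
    then have "?P r = ?P (t * x)" by (rule Tplane_point_eq[OF assms(1) \<open>t * x \<noteq> 0\<close>])
    with \<open>P = ?P r\<close> show "P = ?P (t * x)" by simp
  qed
qed

lemma card_image_eq_if_same_fibres:
  assumes "\<And>x y. x \<in> D \<Longrightarrow> y \<in> D \<Longrightarrow> f x = f y \<longleftrightarrow> g x = g y"
  shows "card (f ` D) = card (g ` D)"
proof -
  define h where "h = f \<circ> inv_into D g"
  have h: "h (g x) = f x" if "x \<in> D" for x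
    using assms[of "inv_into D g (g x)" x] that by (simp add: h_def inv_into_into f_inv_into_f)
  then have "f ` D = h ` g ` D" by (simp add: image_image cong: image_cong)
  moreover have "inj_on h (g ` D)"
  proof (rule inj_onI)
    fix y1 y2 assume "y1 \<in> g ` D" "y2 \<in> g ` D" "h y1 = h y2"
    then show "y1 = y2" using assms h by auto
  qed
  ultimately show ?thesis by (simp add: card_image)
qed

section \<open>The extension of degree three\<close>

text \<open>F_q^* is represented as the set of (q-1)-th roots of unity in F.\<close>

locale cubic_extension =
  fixes q :: nat
  assumes card_eq: "card (UNIV :: 'a::{finite,field} set) = q ^ 3"
begin

lemma q_gt_1: "1 < q"
proof (rule ccontr)
  assume "\<not> 1 < q"
  then have "q ^ 3 \<le> 1" by (cases q) auto
  then show False using card_finite_field_ge_2[where 'a='a] card_eq by simp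
qed

lemma card_minus_1_eq: "CARD('a) - 1 = (q - 1) * (q ^ 2 + q + 1)"
proof -
  obtain k where "q = Suc k" using q_gt_1 by (cases q) auto
  then show ?thesis unfolding card_eq by (simp add: algebra_simps power2_eq_square power3_eq_cube)
qed

lemma pow_q_cube: "x ^ (q ^ 3) = (x::'a)"
  using pow_card_eq[of x] unfolding card_eq .

lemma normq_pow_q: "normq q (x::'a) ^ q = normq q x"
proof -
  have "normq q x ^ q = x ^ (q ^ 3) * x ^ (q ^ 2 + q)"
    by (simp add: normq_def power_mult[symmetric] power_add[symmetric] algebra_simps
        power2_eq_square power3_eq_cube)
  then show ?thesis by (simp add: pow_q_cube normq_def power_add)
qed

lemma normq_frobenius: "normq q ((x::'a) ^ q) = normq q x"
  by (simp add: normq_power normq_pow_q)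

lemma normq_pow_q_plus_1: "normq q ((x::'a) ^ (q + 1)) = normq q x ^ 2"
  unfolding power_add power_one_right normq_mult normq_frobenius by (simp add: power2_eq_square)

lemma Fq_unit_iff_normq: "(b::'a) ^ (q - 1) = 1 \<longleftrightarrow> (\<exists>x. x \<noteq> 0 \<and> b = normq q x)"
  using pow_eq_1_iff_power[OF card_minus_1_eq] by (simp add: normq_def)

lemma normq_eq_1_iff: "normq q (y::'a) = 1 \<longleftrightarrow> (\<exists>t. t \<noteq> 0 \<and> y = t ^ (q - 1))"
  using pow_eq_1_iff_power[of "q ^ 2 + q + 1" "q - 1"] card_minus_1_eq
  by (simp add: normq_def mult.commute)

lemma card_Fq_units: "card {b::'a. b ^ (q - 1) = 1} = q - 1"
  using card_minus_1_eq by (intro card_roots_of_unity) simp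

lemma nonzero_Fq_square_iff:
  assumes "odd q"
  shows "nonzero_Fq_square q (b::'a) \<longleftrightarrow> b ^ ((q - 1) div 2) = 1"
proof
  assume "nonzero_Fq_square q b"
  then obtain c where "c ^ q = c" "c \<noteq> 0" "b = c ^ 2" unfolding nonzero_Fq_square_def by blast
  then have "c ^ (q - 1) = 1" using nonzero_pow_eq_self_iff[OF q_gt_1] by blast
  then show "b ^ ((q - 1) div 2) = 1"
    using \<open>b = c ^ 2\<close> assms by (simp add: power_mult[symmetric])
next
  assume "b ^ ((q - 1) div 2) = 1"
  moreover have "2 * ((q - 1) div 2) = q - 1" using assms q_gt_1 by simp
  then have "CARD('a) - 1 = ((q - 1) div 2) * (2 * (q ^ 2 + q + 1))"
    using card_minus_1_eq by (metis mult.assoc mult.commute)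
  ultimately obtain x where "x \<noteq> 0" "b = x ^ (2 * (q ^ 2 + q + 1))"
    using pow_eq_1_iff_power by blast
  then have "b = normq q x ^ 2" by (metis normq_def power_mult mult.commute)
  then show "nonzero_Fq_square q b"
    unfolding nonzero_Fq_square_def using normq_pow_q \<open>x \<noteq> 0\<close> by (intro exI[of _ "normq q x"]) simp
qed

lemma Tplane_eq_iff:
  assumes "(\<kappa>1::'a) \<noteq> 0" and "\<kappa>2 \<noteq> 0"
  shows "Tplane q \<kappa>1 = Tplane q \<kappa>2 \<longleftrightarrow> normq q \<kappa>1 = normq q \<kappa>2"
proof
  assume "Tplane q \<kappa>1 = Tplane q \<kappa>2"
  moreover have "pt (\<kappa>1 ^ (q + 1), 1, \<kappa>1) \<in> Tplane q \<kappa>1"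
    using pt_mem_Tplane[of 1 \<kappa>1 q] by simp
  ultimately have "pt (\<kappa>1 ^ (q + 1), 1, \<kappa>1) \<in> Tplane q \<kappa>2" by simp
  then obtain r where "r \<noteq> 0"
    and "pt (\<kappa>1 ^ (q + 1), 1, \<kappa>1) = pt (r * \<kappa>2 ^ (q + 1), r ^ q, r ^ (q ^ 2) * \<kappa>2)"
    unfolding Tplane_def by blast
  then obtain c where "(r * \<kappa>2 ^ (q + 1), r ^ q, r ^ (q ^ 2) * \<kappa>2) = sc3 c (\<kappa>1 ^ (q + 1), 1, \<kappa>1)"
    using pt_eq_imp_proportional by blast
  then have "r ^ q = c" and "r ^ (q ^ 2) * \<kappa>2 = c * \<kappa>1" by simp_all
  then have "normq q (r ^ (q ^ 2)) * normq q \<kappa>2 = normq q (r ^ q) * normq q \<kappa>1"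
    by (metis normq_mult)
  moreover have "normq q (r ^ (q ^ 2)) = normq q r" and "normq q (r ^ q) = normq q r"
    by (simp_all add: power2_eq_square power_mult normq_frobenius)
  ultimately show "normq q \<kappa>1 = normq q \<kappa>2" using \<open>r \<noteq> 0\<close> by simp
next
  assume "normq q \<kappa>1 = normq q \<kappa>2"
  then have "normq q (\<kappa>2 / \<kappa>1) = 1" using assms by (simp add: normq_divide)
  then obtain t where "t \<noteq> 0" "\<kappa>2 / \<kappa>1 = t ^ (q - 1)" using normq_eq_1_iff by blast
  then have "\<kappa>2 = \<kappa>1 * t ^ (q - 1)" using assms(1) by (simp add: field_simps)
  then show "Tplane q \<kappa>1 = Tplane q \<kappa>2"
    using Tplane_mult_pow[OF _ \<open>t \<noteq> 0\<close> pow_q_cube, where \<kappa> = \<kappa>1] q_gt_1 by simp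
qed

lemma sls_pencil_eq_iff:
  assumes "(\<theta>1::'a) \<noteq> 0" and "\<theta>2 \<noteq> 0"
  shows "sls_pencil q \<theta>1 = sls_pencil q \<theta>2 \<longleftrightarrow> normq q \<theta>1 = normq q \<theta>2"
proof
  assume pencils: "sls_pencil q \<theta>1 = sls_pencil q \<theta>2"
  have "Defs.join Tpt (pt (\<theta>1, 1, 0)) \<in> sls_pencil q \<theta>2"
    using join_mem_sls_pencil[of 1 \<theta>1 q] unfolding pencils by simp
  then obtain Q where "Q \<in> slsS q \<theta>2" and L: "Defs.join Tpt (pt (\<theta>1, 1, 0)) = Defs.join Tpt Q"
    unfolding sls_pencil_def by blast
  then obtain x where "x \<noteq> 0" and Q: "Q = pt (x * \<theta>2, x ^ q, 0)"
    unfolding slsS_def by blast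
  have "pt (\<theta>1, 1, 0) \<in> Defs.join Tpt (pt (\<theta>1, 1, 0))"
    by (subst pt_mem_join_Tpt_iff) simp_all
  then have "pt (\<theta>1, 1, 0) \<in> Defs.join Tpt (pt (x * \<theta>2, x ^ q, 0))"
    unfolding L Q .
  then have "\<theta>1 * x ^ q = x * \<theta>2"
    by (subst (asm) pt_mem_join_Tpt_iff) (use \<open>x \<noteq> 0\<close> in simp_all)
  then have "normq q \<theta>1 * normq q (x ^ q) = normq q x * normq q \<theta>2"
    by (simp only: normq_mult[symmetric])
  then show "normq q \<theta>1 = normq q \<theta>2"
    using \<open>x \<noteq> 0\<close> by (simp add: normq_frobenius)
next
  assume "normq q \<theta>1 = normq q \<theta>2"
  then have "normq q (\<theta>1 / \<theta>2) = 1" using assms by (simp add: normq_divide)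
  then obtain u where "u \<noteq> 0" "\<theta>1 / \<theta>2 = u ^ (q - 1)" using normq_eq_1_iff by blast
  then have "\<theta>1 = \<theta>2 * u ^ (q - 1)" using assms(2) by (simp add: field_simps)
  then have "slsS q \<theta>1 = slsS q \<theta>2"
    using slsS_mult_pow[OF _ \<open>u \<noteq> 0\<close>, where \<theta> = \<theta>2] q_gt_1 by simp
  then show "sls_pencil q \<theta>1 = sls_pencil q \<theta>2"
    unfolding sls_pencil_def by simp
qed

lemma arches_iff:
  assumes "(\<theta>::'a) \<noteq> 0" and "\<kappa> \<noteq> 0"
  shows "arches (sls_pencil q \<theta>) (Tplane q \<kappa>) \<longleftrightarrow> normq q \<theta> = normq q \<kappa> ^ 2"
proof
  assume "arches (sls_pencil q \<theta>) (Tplane q \<kappa>)"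
  moreover have "Defs.join Tpt (pt (1 * \<theta>, 1 ^ q, 0)) \<in> sls_pencil q \<theta>"
    by (rule join_mem_sls_pencil) simp
  ultimately obtain P where "P \<in> Defs.join Tpt (pt (1 * \<theta>, 1 ^ q, 0))" and "P \<in> Tplane q \<kappa>"
    unfolding arches_def by blast
  then obtain r where "r \<noteq> 0"
    and "pt (r * \<kappa> ^ (q + 1), r ^ q, r ^ (q ^ 2) * \<kappa>) \<in> Defs.join Tpt (pt (1 * \<theta>, 1 ^ q, 0))"
    unfolding Tplane_def by blast
  then have "\<kappa> ^ (q + 1) = r ^ (q - 1) * \<theta>"
    by (subst (asm) Tplane_point_mem_sls_line_iff) (use q_gt_1 in simp_all)
  then have "normq q \<kappa> ^ 2 = normq q (r ^ (q - 1)) * normq q \<theta>"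
    by (simp only: normq_pow_q_plus_1[symmetric] normq_mult[symmetric])
  moreover have "normq q (r ^ (q - 1)) = 1" using normq_eq_1_iff \<open>r \<noteq> 0\<close> by blast
  ultimately show "normq q \<theta> = normq q \<kappa> ^ 2" by simp
next
  assume "normq q \<theta> = normq q \<kappa> ^ 2"
  then have "normq q (\<kappa> ^ (q + 1) / \<theta>) = 1"
    unfolding normq_divide normq_pow_q_plus_1 using assms by simp
  then obtain t where "t \<noteq> 0" and "\<kappa> ^ (q + 1) / \<theta> = t ^ (q - 1)"
    using normq_eq_1_iff by blast
  then have t: "\<kappa> ^ (q + 1) = t ^ (q - 1) * \<theta>" using assms(1) by (simp add: field_simps)
  show "arches (sls_pencil q \<theta>) (Tplane q \<kappa>)"
    unfolding arches_def
  proof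
    fix L assume "L \<in> sls_pencil q \<theta>"
    then obtain x where "x \<noteq> 0" and "L = Defs.join Tpt (pt (x * \<theta>, x ^ q, 0))"
      unfolding sls_pencil_def slsS_def by blast
    then show "\<exists>!P. P \<in> L \<and> P \<in> Tplane q \<kappa>"
      using sls_line_meets_Tplane_uniquely[OF q_gt_1 _ \<open>t \<noteq> 0\<close> assms(1) t] by simp
  qed
qed

section \<open>Counting pencils and arched planes\<close>

lemma card_sls_pencils_with_norm:
  "card {sls_pencil q (\<theta>::'a) | \<theta>. \<theta> \<noteq> 0 \<and> P (normq q \<theta>)} = card {b::'a. b ^ (q - 1) = 1 \<and> P b}"
proof -
  let ?D = "{\<theta>::'a. \<theta> \<noteq> 0 \<and> P (normq q \<theta>)}"
  have "{sls_pencil q \<theta> | \<theta>. \<theta> \<noteq> 0 \<and> P (normq q \<theta>)} = sls_pencil q ` ?D" by blast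
  moreover have "card (sls_pencil q ` ?D) = card (normq q ` ?D)"
    by (rule card_image_eq_if_same_fibres) (simp add: sls_pencil_eq_iff)
  moreover have "normq q ` ?D = {b. b ^ (q - 1) = 1 \<and> P b}"
    using Fq_unit_iff_normq by auto
  ultimately show ?thesis by simp
qed

lemma card_T_sls_pencils: "card (T_sls_pencils q :: ('a \<times> 'a \<times> 'a) set set set set) = q - 1"
  using card_sls_pencils_with_norm[of "\<lambda>_. True"] card_Fq_units unfolding T_sls_pencils_def by simp

lemma card_Fq_unit_squares:
  assumes "odd q"
  shows "card {b::'a. b ^ (q - 1) = 1 \<and> nonzero_Fq_square q b} = (q - 1) div 2"
proof -
  have q1: "q - 1 = (q - 1) div 2 * 2" using assms q_gt_1 by simp
  then have "{b::'a. b ^ (q - 1) = 1 \<and> nonzero_Fq_square q b} = {b. b ^ ((q - 1) div 2) = 1}"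
    using nonzero_Fq_square_iff[OF assms] by (metis power_mult power_one)
  moreover have "(q - 1) div 2 dvd CARD('a) - 1"
    using card_minus_1_eq q1 by (metis dvd_mult_left dvd_triv_left)
  ultimately show ?thesis by (simp add: card_roots_of_unity)
qed

lemma card_sls_pencils_square_norm:
  assumes "odd q"
  shows "card {sls_pencil q (\<theta>::'a) | \<theta>. \<theta> \<noteq> 0 \<and> nonzero_Fq_square q (normq q \<theta>)} = (q - 1) div 2"
  using card_sls_pencils_with_norm card_Fq_unit_squares[OF assms] by simp

lemma card_sls_pencils_nonsquare_norm:
  assumes "odd q"
  shows "card {sls_pencil q (\<theta>::'a) | \<theta>. \<theta> \<noteq> 0 \<and> \<not> nonzero_Fq_square q (normq q \<theta>)} = (q - 1) div 2"
proof -
  have "{b::'a. b ^ (q - 1) = 1 \<and> \<not> nonzero_Fq_square q b}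
      = {b. b ^ (q - 1) = 1} - {b. b ^ (q - 1) = 1 \<and> nonzero_Fq_square q b}" by blast
  also have "card \<dots> = card {b::'a. b ^ (q - 1) = 1} - card {b::'a. b ^ (q - 1) = 1 \<and> nonzero_Fq_square q b}"
    by (rule card_Diff_subset) auto
  finally have "card {b::'a. b ^ (q - 1) = 1 \<and> \<not> nonzero_Fq_square q b} = (q - 1) - (q - 1) div 2"
    using card_Fq_units card_Fq_unit_squares[OF assms] by simp
  also have "\<dots> = (q - 1) div 2" using assms by (elim oddE) simp
  finally show ?thesis
    using card_sls_pencils_with_norm[of "\<lambda>b. \<not> nonzero_Fq_square q b"] by simp
qed

lemma arched_T_planes_eq:
  assumes "(\<theta>::'a) \<noteq> 0"
  shows "{Pi \<in> T_planes q. arches (sls_pencil q \<theta>) Pi}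
    = {Tplane q \<kappa> | \<kappa>::'a. \<kappa> \<noteq> 0 \<and> normq q \<theta> = normq q \<kappa> ^ 2}"
  unfolding T_planes_def using arches_iff[OF assms] by blast

lemma ex1_arched_T_plane_if_even:
  assumes "even q" and "Pen \<in> (T_sls_pencils q :: ('a \<times> 'a \<times> 'a) set set set set)"
  shows "\<exists>!Pi. Pi \<in> T_planes q \<and> arches Pen Pi"
proof -
  obtain \<theta> :: 'a where "\<theta> \<noteq> 0" and Pen: "Pen = sls_pencil q \<theta>"
    using assms(2) unfolding T_sls_pencils_def by blast
  define n where "n = normq q \<theta> ^ (q div 2)"
  have n2: "normq q \<theta> = n ^ 2"
    using assms(1) normq_pow_q[of \<theta>] by (simp add: n_def power_mult[symmetric])
  have "n ^ q = (normq q \<theta> ^ q) ^ (q div 2)"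
    unfolding n_def by (simp only: power_mult[symmetric] mult.commute)
  also have "\<dots> = n" unfolding normq_pow_q n_def ..
  finally have "n ^ q = n" .
  moreover have "n \<noteq> 0" using \<open>\<theta> \<noteq> 0\<close> by (simp add: n_def)
  ultimately obtain \<kappa> where "\<kappa> \<noteq> 0" "n = normq q \<kappa>"
    using nonzero_pow_eq_self_iff[OF q_gt_1] Fq_unit_iff_normq by blast
  have sq: "a ^ 2 = b ^ 2 \<longleftrightarrow> a = b" for a b :: 'a
    using assms(1) card_eq by (intro power2_eq_power2_iff_if_even_card) simp
  have "{\<kappa>'::'a. \<kappa>' \<noteq> 0 \<and> normq q \<theta> = normq q \<kappa>' ^ 2} = {\<kappa>'. \<kappa>' \<noteq> 0 \<and> normq q \<kappa>' = normq q \<kappa>}"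
    unfolding n2 \<open>n = normq q \<kappa>\<close> sq by auto
  then have "{Pi \<in> T_planes q. arches Pen Pi} = {Tplane q \<kappa>}"
    unfolding Pen arched_T_planes_eq[OF \<open>\<theta> \<noteq> 0\<close>] using Tplane_eq_iff \<open>\<kappa> \<noteq> 0\<close> by auto
  then show ?thesis by blast
qed

lemma arches_same_T_plane_imp_eq:
  assumes "Pen1 \<in> (T_sls_pencils q :: ('a \<times> 'a \<times> 'a) set set set set)" and "Pen2 \<in> T_sls_pencils q"
    and "P \<in> T_planes q" and "arches Pen1 P" and "arches Pen2 P"
  shows "Pen1 = Pen2"
proof -
  obtain \<theta>1 \<theta>2 \<kappa> :: 'a where "\<theta>1 \<noteq> 0" "\<theta>2 \<noteq> 0" "\<kappa> \<noteq> 0"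
    and "Pen1 = sls_pencil q \<theta>1" "Pen2 = sls_pencil q \<theta>2" "P = Tplane q \<kappa>"
    using assms(1-3) unfolding T_sls_pencils_def T_planes_def by blast
  then show ?thesis using assms(4,5) arches_iff sls_pencil_eq_iff by simp
qed

lemma card_arched_T_planes_if_square:
  assumes "odd q" and "(\<theta>::'a) \<noteq> 0" and "nonzero_Fq_square q (normq q \<theta>)"
  shows "card {Pi \<in> T_planes q. arches (sls_pencil q \<theta>) Pi} = 2"
proof -
  obtain b where b: "b ^ q = b" "b \<noteq> 0" "normq q \<theta> = b ^ 2"
    using assms(3) unfolding nonzero_Fq_square_def by blast
  then have "b ^ (q - 1) = 1" "(- b) ^ (q - 1) = 1"
    using nonzero_pow_eq_self_iff[OF q_gt_1] assms(1) q_gt_1 by auto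
  then obtain \<kappa>1 \<kappa>2 where "\<kappa>1 \<noteq> 0" "normq q \<kappa>1 = b" "\<kappa>2 \<noteq> 0" "normq q \<kappa>2 = - b"
    using Fq_unit_iff_normq by metis
  have "(1::'a) \<noteq> - 1" using one_neq_minus_one_if_odd_card[where 'a='a] assms(1) card_eq by simp
  have "b \<noteq> - b"
  proof
    assume "b = - b"
    then have "b * 1 = b * - 1" by simp
    then show False using \<open>b \<noteq> 0\<close> \<open>(1::'a) \<noteq> - 1\<close> by (simp only: mult_cancel_left) simp
  qed
  have "Tplane q \<kappa> \<in> {Tplane q \<kappa>1, Tplane q \<kappa>2} \<longleftrightarrow> b ^ 2 = normq q \<kappa> ^ 2"
    if "\<kappa> \<noteq> 0" for \<kappa> :: 'a
    using Tplane_eq_iff[OF that \<open>\<kappa>1 \<noteq> 0\<close>] Tplane_eq_iff[OF that \<open>\<kappa>2 \<noteq> 0\<close>]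
      \<open>normq q \<kappa>1 = b\<close> \<open>normq q \<kappa>2 = - b\<close> by (auto simp: power2_eq_iff)
  then have "{Pi \<in> T_planes q. arches (sls_pencil q \<theta>) Pi} = {Tplane q \<kappa>1, Tplane q \<kappa>2}"
    unfolding arched_T_planes_eq[OF assms(2)] b(3) using \<open>\<kappa>1 \<noteq> 0\<close> \<open>\<kappa>2 \<noteq> 0\<close> by blast
  moreover have "Tplane q \<kappa>1 \<noteq> Tplane q \<kappa>2"
    using Tplane_eq_iff \<open>\<kappa>1 \<noteq> 0\<close> \<open>\<kappa>2 \<noteq> 0\<close> \<open>normq q \<kappa>1 = b\<close> \<open>normq q \<kappa>2 = - b\<close> \<open>b \<noteq> - b\<close>
    by simp
  ultimately show ?thesis by simp
qed

lemma no_arched_T_plane_if_nonsquare: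
  assumes "(\<theta>::'a) \<noteq> 0" and "\<not> nonzero_Fq_square q (normq q \<theta>)"
  shows "\<not> (\<exists>Pi \<in> T_planes q. arches (sls_pencil q \<theta>) Pi)"
proof
  assume "\<exists>Pi \<in> T_planes q. arches (sls_pencil q \<theta>) Pi"
  then obtain \<kappa> :: 'a where "\<kappa> \<noteq> 0" "normq q \<theta> = normq q \<kappa> ^ 2"
    using arched_T_planes_eq[OF assms(1)] by blast
  then have "nonzero_Fq_square q (normq q \<theta>)"
    unfolding nonzero_Fq_square_def using normq_pow_q by (intro exI[of _ "normq q \<kappa>"]) simp
  with assms(2) show False ..
qed

end

text \<open>Otherwise the name prime in the statement below would resolve to HOL-Algebra's Divisibility.prime.\<close>

hide_const (open) Divisibility.prime

theorem corollary6p2: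
  fixes q :: nat
  assumes card: "card (UNIV :: 'a::{finite,field} set) = q ^ 3"
    and pp: "\<exists>p k. prime p \<and> 0 < k \<and> q = p ^ k"
  shows "(even q \<longrightarrow>
            card (T_sls_pencils q :: ('a \<times> 'a \<times> 'a) set set set set) = q - 1 \<and>
            (\<forall>Pen \<in> (T_sls_pencils q :: ('a \<times> 'a \<times> 'a) set set set set).
                \<exists>!Pi. Pi \<in> T_planes q \<and> arches Pen Pi) \<and>
            (\<forall>Pen1 \<in> (T_sls_pencils q :: ('a \<times> 'a \<times> 'a) set set set set).
             \<forall>Pen2 \<in> T_sls_pencils q. \<forall>Pi \<in> T_planes q.
                arches Pen1 Pi \<and> arches Pen2 Pi \<longrightarrow> Pen1 = Pen2))
       \<and> (odd q \<longrightarrow>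
            card {sls_pencil q (\<theta>::'a) | \<theta>. \<theta> \<noteq> 0 \<and> nonzero_Fq_square q (normq q \<theta>)}
              = (q - 1) div 2 \<and>
            (\<forall>\<theta>::'a. \<theta> \<noteq> 0 \<and> nonzero_Fq_square q (normq q \<theta>) \<longrightarrow>
                card {Pi \<in> T_planes q. arches (sls_pencil q \<theta>) Pi} = 2) \<and>
            card {sls_pencil q (\<theta>::'a) | \<theta>. \<theta> \<noteq> 0 \<and> \<not> nonzero_Fq_square q (normq q \<theta>)}
              = (q - 1) div 2 \<and>
            (\<forall>\<theta>::'a. \<theta> \<noteq> 0 \<and> \<not> nonzero_Fq_square q (normq q \<theta>) \<longrightarrow>
                \<not> (\<exists>Pi \<in> T_planes q. arches (sls_pencil q \<theta>) Pi)))"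
proof -
  interpret cubic_extension q by (fact cubic_extension.intro[OF card])
  show ?thesis
    using ex1_arched_T_plane_if_even arches_same_T_plane_imp_eq
      card_arched_T_planes_if_square no_arched_T_plane_if_nonsquare
    by (simp add: card_T_sls_pencils card_sls_pencils_square_norm card_sls_pencils_nonsquare_norm)
qed

end
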